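(* Let $H$ be a separable complex Hilbert space, $\{v_j\}_{j\in\mathbb N}$ an orthonormal basis of $H$, $\{w_j\}_{j\in\mathbb N}$ a set of unit vectors in $H$, and $N\ge1$. Let $\mathcal B_N=\{w_j\}_{1\le j\le N}\cup\{v_j\}_{j\ge N+1}$, $\hat H_N=\operatorname{span}\{v_1,\dots,v_N,w_1,\dots,w_N\}$ and $S_H=\{f\in H:\|f\|=1\}$. Then $\mathcal B_N$ is a frame of $H$ if and only if for every $f\in S_H\cap\hat H_N$, $$\sum_{j=1}^N\big(|\langle f,w_j\rangle|^2-|\langle f,v_j\rangle|^2\big)+1>0.$$ Moreover, the optimal frame bounds of $\mathcal B_N$ are the maximum and minimum of the functional $f\mapsto\sum_{j=1}^N(|\langle f,w_j\rangle|^2-|\langle f,v_j\rangle|^2)+1$ on $S_H\cap\hat H_N$.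
   Context: A sequence $\{u_j\}$ in $H$ is a frame if there are constants $0<A\le B<\infty$ with $A\|f\|^2\le\sum_j|\langle f,u_j\rangle|^2\le B\|f\|^2$ for all $f\in H$; the optimal frame bounds are the largest such $A$ and smallest such $B$. *)

theory Defs
  imports "HOL-Analysis.Analysis"
begin

text \<open>HOL-Analysis only provides real inner product
spaces, so we extend the class real_inner by a complex scalar multiplication
and a complex inner product (linear in the first argument, conjugate-symmetric)
whose real part is the underlying real inner product. A complex Hilbert space is a type of sort
{complex_inner, complete_space}.\<close>

class complex_inner = real_inner +
  fixes scaleC :: "complex \<Rightarrow> 'a \<Rightarrow> 'a"
    and cinner :: "'a \<Rightarrow> 'a \<Rightarrow> complex"
  assumes scaleC_add_right: "scaleC a (x + y) = scaleC a x + scaleC a y"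
    and scaleC_add_left: "scaleC (a + b) x = scaleC a x + scaleC b x"
    and scaleC_scaleC: "scaleC a (scaleC b x) = scaleC (a * b) x"
    and scaleC_one: "scaleC 1 x = x"
    and scaleR_scaleC: "scaleR r x = scaleC (complex_of_real r) x"
    and cinner_add_left: "cinner (x + y) z = cinner x z + cinner y z"
    and cinner_scaleC_left: "cinner (scaleC a x) y = a * cinner x y"
    and cinner_commute: "cinner x y = cnj (cinner y x)"
    and inner_cinner: "inner x y = Re (cinner x y)"

definition cspan :: "'a::complex_inner set \<Rightarrow> 'a set" where
  "cspan S = {\<Sum>x\<in>F. scaleC (c x) x | F c. finite F \<and> F \<subseteq> S}"

definition orthonormal_basis :: "(nat \<Rightarrow> 'a::complex_inner) \<Rightarrow> bool" where
  "orthonormal_basis v \<longleftrightarrow>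
     (\<forall>i j. cinner (v i) (v j) = (if i = j then 1 else 0)) \<and>
     closure (cspan (range v)) = UNIV"

definition frame_bounds :: "(nat \<Rightarrow> 'a::complex_inner) \<Rightarrow> real \<Rightarrow> real \<Rightarrow> bool" where
  "frame_bounds u A B \<longleftrightarrow> 0 < A \<and> A \<le> B \<and>
     (\<forall>f. summable (\<lambda>j. (cmod (cinner f (u j)))\<^sup>2) \<and>
          A * (norm f)\<^sup>2 \<le> (\<Sum>j. (cmod (cinner f (u j)))\<^sup>2) \<and>
          (\<Sum>j. (cmod (cinner f (u j)))\<^sup>2) \<le> B * (norm f)\<^sup>2)"

definition frame :: "(nat \<Rightarrow> 'a::complex_inner) \<Rightarrow> bool" where
  "frame u \<longleftrightarrow> (\<exists>A B. frame_bounds u A B)"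

definition optimal_frame_bounds :: "(nat \<Rightarrow> 'a::complex_inner) \<Rightarrow> real \<Rightarrow> real \<Rightarrow> bool" where
  "optimal_frame_bounds u A B \<longleftrightarrow> frame_bounds u A B \<and>
     (\<forall>A' B'. frame_bounds u A' B' \<longrightarrow> A' \<le> A \<and> B \<le> B')"

end

theory Submission
  imports Defs
begin

(* By Parseval, the frame sum of B_N at f equals Q f + |f|^2, where
   Q f = sum_{j<N} (|<f,w_j>|^2 - |<f,v_j>|^2); on unit vectors this is the functional Phi = Q + 1.
   Q is 2-homogeneous and depends on f only through its orthogonal projection g onto the
   finite-dimensional space Hhat_N, so with h = f - g the frame sum is |g|^2 Phi(g/|g|) + |h|^2.
   Phi attains a minimum a and a maximum b on the compact unit sphere of Hhat_N, and a <= 1 <= b: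
   Phi(w_j) >= 1 by Bessel, and Phi(v_i) <= 1 for some i by averaging. Hence
   a |f|^2 <= frame sum <= b |f|^2 with equality at the extremal points, so B_N is a frame
   iff a > 0, and then a and b are its optimal bounds. *)

section \<open>Orthonormal projections in real inner product spaces\<close>

definition orthonormal_set :: "'a::real_inner set \<Rightarrow> bool" where
  "orthonormal_set U \<longleftrightarrow> (\<forall>x\<in>U. \<forall>y\<in>U. inner x y = (if x = y then 1 else 0))"

definition orthonormal_projection :: "'a::real_inner set \<Rightarrow> 'a \<Rightarrow> 'a" where
  "orthonormal_projection U f = (\<Sum>e\<in>U. inner e f *\<^sub>R e)"

lemma orthonormal_projection_in_span: "orthonormal_projection U f \<in> span U"
  unfolding orthonormal_projection_def by (intro span_sum span_scale span_base)

lemma orthogonal_orthonormal_projection: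
  assumes "finite U" "orthonormal_set U" "h \<in> span U"
  shows "orthogonal (f - orthonormal_projection U f) h"
proof -
  have "orthogonal (f - orthonormal_projection U f) e" if "e \<in> U" for e
  proof -
    have "inner (orthonormal_projection U f) e = (\<Sum>d\<in>U. if d = e then inner e f else 0)"
      unfolding orthonormal_projection_def inner_sum_left
      using assms(2) that by (intro sum.cong) (auto simp: orthonormal_set_def)
    also have "\<dots> = inner f e"
      using assms(1) that by (simp add: inner_commute)
    finally show ?thesis
      by (simp add: orthogonal_def inner_diff_left)
  qed
  then show ?thesis
    using assms(3) orthogonal_to_span by blast
qed

lemma orthonormal_projection_of_span:
  assumes "finite U" "orthonormal_set U" "f \<in> span U"
  shows "orthonormal_projection U f = f"
  using orthogonal_orthonormal_projection[OF assms(1,2), of "f - orthonormal_projection U f" f]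
  by (simp add: assms(3) orthonormal_projection_in_span span_diff orthogonal_def)

lemma orthonormal_basis_of_span_exists:
  fixes T :: "'a::real_inner set"
  assumes "finite T"
  obtains U where "finite U" "orthonormal_set U" "span U = span T"
  using assms
proof (induction T arbitrary: thesis rule: finite_induct)
  case empty
  show ?case by (rule empty.prems[of "{}"]) (simp_all add: orthonormal_set_def)
next
  case (insert a T)
  obtain U where U: "finite U" "orthonormal_set U" "span U = span T"
    using insert.IH by blast
  have span_insert_a: "span (insert a T) = span (insert a U)"
    by (simp add: U(3) span_insert)
  define r where "r = a - orthonormal_projection U a"
  show ?case
  proof (cases "r = 0")
    case True
    then have "a \<in> span U"
      unfolding r_def using orthonormal_projection_in_span[of U a] by simp
    then show ?thesis
      using insert.prems[OF U(1,2)] span_insert_a by (simp add: span_redundant)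
  next
    case False
    define e where "e = r /\<^sub>R norm r"
    have "orthogonal r d" if "d \<in> U" for d
      unfolding r_def using U(1,2) that by (intro orthogonal_orthonormal_projection span_base)
    then have e_orth: "inner e d = 0" if "d \<in> U" for d
      using that by (simp add: e_def orthogonal_def)
    have "inner e e = 1"
      using False by (simp add: e_def dot_square_norm power2_eq_square)
    then have "orthonormal_set (insert e U)"
      using U(2) e_orth by (auto simp: orthonormal_set_def inner_commute)
    moreover have "span (insert e U) = span (insert a U)"
    proof -
      have U_sub: "U \<subseteq> span (insert x U)" for x
        by (auto intro: span_base)
      then have proj: "orthonormal_projection U a \<in> span (insert x U)" for x
        using orthonormal_projection_in_span span_mono[of U "insert x U"] by blast
      have "a = norm r *\<^sub>R e + orthonormal_projection U a"
        using False by (simp add: e_def r_def)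
      then have "a \<in> span (insert e U)"
        by (metis proj span_add span_base span_scale insertI1)
      moreover have "e = inverse (norm r) *\<^sub>R (a - orthonormal_projection U a)"
        by (simp add: e_def r_def)
      then have "e \<in> span (insert a U)"
        by (metis proj span_diff span_base span_scale insertI1)
      ultimately show ?thesis
        using U_sub by (simp add: span_eq)
    qed
    ultimately show ?thesis
      using insert.prems[of "insert e U"] U(1) span_insert_a by simp
  qed
qed

lemma compact_coefficient_box:
  fixes U :: "'a::real_normed_vector set"
  shows "compact ((\<lambda>c. \<Sum>e\<in>U. c e *\<^sub>R e) ` Pi UNIV (\<lambda>_. {-1..1::real}))"
proof (rule compact_continuous_image)
  show "continuous_on (Pi UNIV (\<lambda>_. {-1..1})) (\<lambda>c. \<Sum>e\<in>U. c e *\<^sub>R e)"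
    by (intro continuous_intros continuous_on_subset[OF continuous_on_product_coordinates]) auto
  have "compactin (product_topology (\<lambda>_. euclidean) UNIV) (PiE UNIV (\<lambda>_. {-1..1::real}))"
    by (simp add: compactin_PiE)
  then show "compact (Pi UNIV (\<lambda>_. {-1..1::real}))"
    by (simp only: euclidean_product_topology PiE_UNIV_domain compactin_euclidean_iff)
qed

lemma compact_span_Int_sphere:
  fixes G :: "'a::real_inner set"
  assumes "finite G"
  shows "compact (span G \<inter> sphere 0 1)"
proof -
  obtain U where U: "finite U" "orthonormal_set U" "span U = span G"
    using orthonormal_basis_of_span_exists[OF assms] by blast
  let ?box = "(\<lambda>c. \<Sum>e\<in>U. c e *\<^sub>R e) ` Pi UNIV (\<lambda>_. {-1..1::real})"
  have "span G \<inter> sphere 0 1 \<subseteq> ?box"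
  proof
    fix x assume x: "x \<in> span G \<inter> sphere 0 1"
    define c where "c e = (if e \<in> U then inner e x else 0)" for e
    have "\<bar>inner e x\<bar> \<le> 1" if "e \<in> U" for e
      using Cauchy_Schwarz_ineq2[of e x] U(2) that x
      by (simp add: orthonormal_set_def norm_eq_sqrt_inner)
    then have "c \<in> Pi UNIV (\<lambda>_. {-1..1})"
      by (auto simp: c_def abs_le_iff)
    moreover have "x = (\<Sum>e\<in>U. c e *\<^sub>R e)"
      using orthonormal_projection_of_span[OF U(1,2), of x] x U(3)
      by (simp add: c_def orthonormal_projection_def)
    ultimately show "x \<in> ?box" by blast
  qed
  moreover have "?box \<subseteq> span U"
    by (auto intro!: span_sum span_scale intro: span_base)
  ultimately have "span G \<inter> sphere 0 1 = ?box \<inter> sphere 0 1"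
    using U(3) by blast
  moreover have "closed (sphere (0::'a) 1)"
    unfolding sphere_def by (intro closed_Collect_eq continuous_intros)
  then have "compact (?box \<inter> sphere 0 1)"
    by (rule compact_Int_closed[OF compact_coefficient_box])
  ultimately show ?thesis
    by simp
qed

lemma orthogonal_projection_exists:
  fixes G :: "'a::real_inner set"
  assumes "finite G"
  obtains g where "g \<in> span G" "\<And>h. h \<in> span G \<Longrightarrow> orthogonal (f - g) h"
proof -
  obtain U where U: "finite U" "orthonormal_set U" "span U = span G"
    using orthonormal_basis_of_span_exists[OF assms] by blast
  show ?thesis
  proof (rule that)
    show "orthonormal_projection U f \<in> span G"
      using U(3) orthonormal_projection_in_span by blast
    show "orthogonal (f - orthonormal_projection U f) h" if "h \<in> span G" for h
      using orthogonal_orthonormal_projection[OF U(1,2)] that U(3) by simp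
  qed
qed

(* Q only sees the projection g of f onto span G, and a <= 1 <= b absorbs the orthogonal rest. *)
lemma homogeneous_form_bounds:
  fixes Q :: "'a::real_inner \<Rightarrow> real"
  assumes "finite G"
    and Q_local: "\<And>f g. (\<And>x. x \<in> G \<Longrightarrow> inner f x = inner g x) \<Longrightarrow> Q f = Q g"
    and Q_hom: "\<And>r f. Q (r *\<^sub>R f) = r\<^sup>2 * Q f"
    and on_sphere: "\<And>g. g \<in> span G \<Longrightarrow> norm g = 1 \<Longrightarrow> a \<le> Q g + 1 \<and> Q g + 1 \<le> b"
    and "a \<le> 1" "1 \<le> b"
  shows "a * (norm f)\<^sup>2 \<le> Q f + (norm f)\<^sup>2 \<and> Q f + (norm f)\<^sup>2 \<le> b * (norm f)\<^sup>2"
proof -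
  obtain g where g: "g \<in> span G" "\<And>h. h \<in> span G \<Longrightarrow> orthogonal (f - g) h"
    using orthogonal_projection_exists[OF assms(1)] by blast
  have "Q f = Q g"
    using g(2) by (intro Q_local) (simp add: orthogonal_def inner_diff_left span_base)
  have "(norm f)\<^sup>2 = (norm g)\<^sup>2 + (norm (f - g))\<^sup>2"
    using norm_add_Pythagorean[of g "f - g"] g by (simp add: orthogonal_commute)
  have "a * (norm g)\<^sup>2 \<le> Q g + (norm g)\<^sup>2 \<and> Q g + (norm g)\<^sup>2 \<le> b * (norm g)\<^sup>2"
  proof (cases "g = 0")
    case True
    then show ?thesis
      using Q_hom[of 0 0] by simp
  next
    case False
    define u where "u = g /\<^sub>R norm g"
    have "u \<in> span G" "norm u = 1"
      using g(1) False by (simp_all add: u_def span_scale)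
    moreover have "Q g = (norm g)\<^sup>2 * Q u"
      using Q_hom[of "norm g" u] False by (simp add: u_def)
    ultimately have "a \<le> Q u + 1" "Q u + 1 \<le> b"
      using on_sphere by auto
    moreover have "Q g + (norm g)\<^sup>2 = (norm g)\<^sup>2 * (Q u + 1)"
      using \<open>Q g = _\<close> by (simp add: algebra_simps)
    ultimately show ?thesis
      using mult_right_mono[of a "Q u + 1" "(norm g)\<^sup>2"] mult_right_mono[of "Q u + 1" b "(norm g)\<^sup>2"]
      by (simp add: mult.commute)
  qed
  moreover have "a * (norm (f - g))\<^sup>2 \<le> (norm (f - g))\<^sup>2" "(norm (f - g))\<^sup>2 \<le> b * (norm (f - g))\<^sup>2"
    using mult_right_mono[OF \<open>a \<le> 1\<close>] mult_right_mono[OF \<open>1 \<le> b\<close>] by simp_all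
  ultimately show ?thesis
    using \<open>Q f = Q g\<close> \<open>(norm f)\<^sup>2 = _\<close> by (simp add: algebra_simps)
qed

section \<open>Complex inner products\<close>

lemma scaleC_zero_left [simp]: "scaleC 0 (x::'a::complex_inner) = 0"
  using scaleR_scaleC[of 0 x] by simp

lemma cinner_zero_left [simp]: "cinner 0 (y::'a::complex_inner) = 0"
  by (metis cinner_scaleC_left mult_zero_left scaleC_zero_left)

lemma cinner_diff_left: "cinner (x - y) (z::'a::complex_inner) = cinner x z - cinner y z"
  using cinner_add_left[of "x - y" y z] by simp

lemma cinner_scaleR_left: "cinner (r *\<^sub>R x) (y::'a::complex_inner) = of_real r * cinner x y"
  by (simp add: scaleR_scaleC cinner_scaleC_left)

lemma cinner_scaleC_right: "cinner x (scaleC a (y::'a::complex_inner)) = cnj a * cinner x y"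
  by (metis cinner_commute cinner_scaleC_left complex_cnj_cnj complex_cnj_mult)

lemma cinner_add_right: "cinner x (y + (z::'a::complex_inner)) = cinner x y + cinner x z"
  by (metis cinner_commute cinner_add_left complex_cnj_add)

lemma cinner_diff_right: "cinner x (y - (z::'a::complex_inner)) = cinner x y - cinner x z"
  by (metis cinner_commute cinner_diff_left complex_cnj_diff)

lemma cinner_zero_right [simp]: "cinner (x::'a::complex_inner) 0 = 0"
  by (metis cinner_commute cinner_zero_left complex_cnj_zero)

lemma cinner_sum_left: "cinner (\<Sum>i\<in>I. u i) (y::'a::complex_inner) = (\<Sum>i\<in>I. cinner (u i) y)"
  by (induct I rule: infinite_finite_induct) (simp_all add: cinner_add_left)

lemma cinner_sum_right: "cinner y (\<Sum>i\<in>I. u i) = (\<Sum>i\<in>I. cinner (y::'a::complex_inner) (u i))"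
  by (induct I rule: infinite_finite_induct) (simp_all add: cinner_add_right)

lemma cinner_eq_Complex_inner:
  "cinner f (x::'a::complex_inner) = Complex (inner f x) (inner f (scaleC \<i> x))"
  by (simp add: complex_eq_iff inner_cinner cinner_scaleC_right)

lemma cmod_cinner_commute: "cmod (cinner x (y::'a::complex_inner)) = cmod (cinner y x)"
  by (metis cinner_commute complex_mod_cnj)

lemma cinner_self: "cinner x x = of_real ((norm (x::'a::complex_inner))\<^sup>2)"
proof -
  have "Im (cinner x x) = 0"
    using arg_cong[OF cinner_commute[of x x], of Im] by simp
  then show ?thesis
    by (simp add: complex_eq_iff power2_norm_eq_inner inner_cinner)
qed

lemma cinner_self_eq_1_iff: "cinner x x = 1 \<longleftrightarrow> norm (x::'a::complex_inner) = 1"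
proof -
  have "cinner x x = 1 \<longleftrightarrow> (norm x)\<^sup>2 = 1"
    unfolding cinner_self by (metis of_real_eq_1_iff)
  then show ?thesis
    using norm_ge_zero[of x] by (auto simp: power2_eq_1_iff)
qed

lemma inner_eq_0_if_cinner_eq_0: "cinner x (y::'a::complex_inner) = 0 \<Longrightarrow> inner x y = 0"
  by (simp add: inner_cinner)

lemma cinner_cspan_eq_0:
  assumes "\<And>u. u \<in> X \<Longrightarrow> cinner z u = 0" "y \<in> cspan X"
  shows "cinner z (y::'a::complex_inner) = 0"
  using assms unfolding cspan_def by (auto simp: cinner_sum_right cinner_scaleC_right subset_iff)

lemma span_subset_cspan:
  fixes X :: "'a::complex_inner set"
  assumes "finite X"
  shows "span (X \<union> scaleC \<i> ` X) \<subseteq> cspan X"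
proof -
  define T where "T = range (\<lambda>c. \<Sum>x\<in>X. scaleC (c x) x)"
  have T_intro: "(\<Sum>x\<in>X. scaleC (c x) x) \<in> T" for c
    unfolding T_def by (rule rangeI)
  have "subspace T"
    unfolding subspace_def
  proof (intro conjI ballI allI)
    show "0 \<in> T"
      using T_intro[of "\<lambda>_. 0"] by simp
    show "a + b \<in> T" if ab: "a \<in> T" "b \<in> T" for a b
    proof -
      obtain c d where "a = (\<Sum>x\<in>X. scaleC (c x) x)" "b = (\<Sum>x\<in>X. scaleC (d x) x)"
        using ab unfolding T_def by blast
      then show ?thesis
        using T_intro[of "\<lambda>x. c x + d x"] by (simp add: scaleC_add_left sum.distrib)
    qed
    show "r *\<^sub>R a \<in> T" if "a \<in> T" for r a
    proof -
      obtain c where "a = (\<Sum>x\<in>X. scaleC (c x) x)"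
        using \<open>a \<in> T\<close> unfolding T_def by blast
      then have "r *\<^sub>R a = (\<Sum>x\<in>X. scaleC (of_real r * c x) x)"
        by (simp only: scaleR_sum_right) (simp add: scaleR_scaleC scaleC_scaleC)
      then show ?thesis
        using T_intro[of "\<lambda>x. of_real r * c x"] by simp
    qed
  qed
  moreover have "scaleC z y \<in> T" if "y \<in> X" for y z
  proof -
    have "(\<Sum>x\<in>X. scaleC (if x = y then z else 0) x) = scaleC z y"
      using that assms by (simp add: if_distrib[of "\<lambda>c. scaleC c _"] cong: if_cong)
    then show ?thesis
      using T_intro[of "\<lambda>x. if x = y then z else 0"] by simp
  qed
  then have "X \<union> scaleC \<i> ` X \<subseteq> T"
    using scaleC_one by (metis (no_types, lifting) image_subset_iff le_sup_iff subsetI)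
  ultimately have "span (X \<union> scaleC \<i> ` X) \<subseteq> T"
    by (rule span_minimal[rotated])
  also have "T \<subseteq> cspan X"
    unfolding T_def cspan_def using assms by auto
  finally show ?thesis .
qed

section \<open>Bessel's inequality and Parseval's identity\<close>

lemma cinner_orthonormal_remainder:
  fixes v :: "nat \<Rightarrow> 'a::complex_inner"
  assumes orth: "\<And>i j. i \<in> I \<Longrightarrow> j \<in> I \<Longrightarrow> cinner (v i) (v j) = (if i = j then 1 else 0)"
    and "finite I" "k \<in> I"
  shows "cinner (x - (\<Sum>i\<in>I. scaleC (cinner x (v i)) (v i))) (v k) = 0"
proof -
  have "cinner (\<Sum>i\<in>I. scaleC (cinner x (v i)) (v i)) (v k) = (\<Sum>i\<in>I. if i = k then cinner x (v k) else 0)"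
    unfolding cinner_sum_left using orth \<open>k \<in> I\<close> by (intro sum.cong) (auto simp: cinner_scaleC_left)
  also have "\<dots> = cinner x (v k)"
    using assms(2,3) by simp
  finally show ?thesis
    by (simp add: cinner_diff_left)
qed

lemma cinner_orthonormal_remainder_sum:
  fixes v :: "nat \<Rightarrow> 'a::complex_inner"
  assumes "\<And>i j. i \<in> I \<Longrightarrow> j \<in> I \<Longrightarrow> cinner (v i) (v j) = (if i = j then 1 else 0)"
    and "finite I"
  shows "cinner (x - (\<Sum>i\<in>I. scaleC (cinner x (v i)) (v i))) (\<Sum>i\<in>I. scaleC (c i) (v i)) = 0"
  using cinner_orthonormal_remainder[OF assms] by (simp add: cinner_sum_right cinner_scaleC_right)

lemma norm_orthonormal_remainder:
  fixes v :: "nat \<Rightarrow> 'a::complex_inner"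
  assumes orth: "\<And>i j. i \<in> I \<Longrightarrow> j \<in> I \<Longrightarrow> cinner (v i) (v j) = (if i = j then 1 else 0)"
    and "finite I"
  shows "(norm (x - (\<Sum>i\<in>I. scaleC (cinner x (v i)) (v i))))\<^sup>2
           = (norm x)\<^sup>2 - (\<Sum>i\<in>I. (cmod (cinner x (v i)))\<^sup>2)"
proof -
  define s where "s = (\<Sum>i\<in>I. scaleC (cinner x (v i)) (v i))"
  have "orthogonal (x - s) s"
    unfolding s_def orthogonal_def
    by (intro inner_eq_0_if_cinner_eq_0 cinner_orthonormal_remainder_sum[OF assms])
  then have pythagoras: "(norm x)\<^sup>2 = (norm (x - s))\<^sup>2 + (norm s)\<^sup>2"
    using norm_add_Pythagorean[of "x - s" s] by simp
  have "cinner s (v i) = cinner x (v i)" if "i \<in> I" for i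
    using cinner_orthonormal_remainder[OF assms that, of x] by (simp add: s_def cinner_diff_left)
  then have "cinner s s = (\<Sum>i\<in>I. cnj (cinner x (v i)) * cinner x (v i))"
    by (subst (2) s_def) (simp add: cinner_sum_right cinner_scaleC_right)
  then have "(norm s)\<^sup>2 = (\<Sum>i\<in>I. (cmod (cinner x (v i)))\<^sup>2)"
    using arg_cong[OF cinner_self[of s], of Re]
    by (simp add: mult.commute complex_mult_cnj cmod_power2)
  with pythagoras show ?thesis
    unfolding s_def by simp
qed

lemma bessel_inequality:
  fixes v :: "nat \<Rightarrow> 'a::complex_inner"
  assumes "\<And>i j. i \<in> I \<Longrightarrow> j \<in> I \<Longrightarrow> cinner (v i) (v j) = (if i = j then 1 else 0)"
    and "finite I"
  shows "(\<Sum>i\<in>I. (cmod (cinner x (v i)))\<^sup>2) \<le> (norm x)\<^sup>2"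
proof -
  have "0 \<le> (norm (x - (\<Sum>i\<in>I. scaleC (cinner x (v i)) (v i))))\<^sup>2"
    by simp
  then show ?thesis
    using norm_orthonormal_remainder[OF assms, of x] by linarith
qed

lemma norm_orthonormal_remainder_le:
  fixes v :: "nat \<Rightarrow> 'a::complex_inner"
  assumes orth: "\<And>i j. i \<in> I \<Longrightarrow> j \<in> I \<Longrightarrow> cinner (v i) (v j) = (if i = j then 1 else 0)"
    and "finite I" "y \<in> cspan (v ` I)"
  shows "norm (x - (\<Sum>i\<in>I. scaleC (cinner x (v i)) (v i))) \<le> norm (x - y)"
proof -
  define s where "s = (\<Sum>i\<in>I. scaleC (cinner x (v i)) (v i))"
  have "cinner (x - s) y = 0"
    by (rule cinner_cspan_eq_0[OF _ assms(3)])
      (use cinner_orthonormal_remainder[OF orth assms(2)] in \<open>auto simp: s_def\<close>)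
  moreover have "cinner (x - s) s = 0"
    unfolding s_def by (rule cinner_orthonormal_remainder_sum[OF assms(1,2)])
  ultimately have "orthogonal (x - s) (s - y)"
    by (simp add: orthogonal_def inner_eq_0_if_cinner_eq_0 cinner_diff_right)
  then have "(norm (x - y))\<^sup>2 = (norm (x - s))\<^sup>2 + (norm (s - y))\<^sup>2"
    using norm_add_Pythagorean[of "x - s" "s - y"] by simp
  then have "(norm (x - s))\<^sup>2 \<le> (norm (x - y))\<^sup>2"
    by simp
  then show ?thesis
    unfolding s_def by (rule power2_le_imp_le) simp
qed

lemma parseval:
  fixes v :: "nat \<Rightarrow> 'a::complex_inner"
  assumes "orthonormal_basis v"
  shows "(\<lambda>j. (cmod (cinner f (v j)))\<^sup>2) sums (norm f)\<^sup>2"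
proof -
  have orth: "\<And>i j. cinner (v i) (v j) = (if i = j then 1 else 0)"
    and dense: "f \<in> closure (cspan (range v))"
    using assms unfolding orthonormal_basis_def by auto
  define s where "s n = (\<Sum>i<n. scaleC (cinner f (v i)) (v i))" for n
  have "(\<lambda>n. norm (f - s n)) \<longlonglongrightarrow> 0"
  proof (rule LIMSEQ_I)
    fix e :: real assume "e > 0"
    then obtain y where y: "y \<in> cspan (range v)" "dist y f < e"
      using dense unfolding closure_approachable by blast
    then obtain F c where F: "finite F" "F \<subseteq> range v" "y = (\<Sum>x\<in>F. scaleC (c x) x)"
      unfolding cspan_def by blast
    obtain C where C: "finite C" "F = v ` C"
      using finite_subset_image[OF F(1,2)] by blast
    obtain n0 where "C \<subseteq> {..<n0}"
      using finite_nat_bounded[OF C(1)] by blast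
    then have "F \<subseteq> v ` {..<n0}"
      using C(2) by (simp add: image_mono)
    have "norm (norm (f - s n) - 0) < e" if "n \<ge> n0" for n
    proof -
      have "F \<subseteq> v ` {..<n}"
        using \<open>F \<subseteq> v ` {..<n0}\<close> that by auto
      then have "y \<in> cspan (v ` {..<n})"
        unfolding cspan_def using F by blast
      then have "norm (f - s n) \<le> norm (f - y)"
        unfolding s_def by (intro norm_orthonormal_remainder_le) (simp_all add: orth)
      then show ?thesis
        using y(2) by (simp add: dist_norm norm_minus_commute)
    qed
    then show "\<exists>n0. \<forall>n\<ge>n0. norm (norm (f - s n) - 0) < e"
      by blast
  qed
  then have "(\<lambda>n. (norm f)\<^sup>2 - (norm (f - s n))\<^sup>2) \<longlonglongrightarrow> (norm f)\<^sup>2 - 0\<^sup>2"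
    by (intro tendsto_intros)
  moreover have "(norm f)\<^sup>2 - (norm (f - s n))\<^sup>2 = (\<Sum>i<n. (cmod (cinner f (v i)))\<^sup>2)" for n
    unfolding s_def by (subst norm_orthonormal_remainder) (simp_all add: orth)
  ultimately show ?thesis
    unfolding sums_def by simp
qed

section \<open>Replacing the first basis vectors\<close>

definition replacement_form :: "(nat \<Rightarrow> 'a::complex_inner) \<Rightarrow> (nat \<Rightarrow> 'a) \<Rightarrow> nat \<Rightarrow> 'a \<Rightarrow> real" where
  "replacement_form v w N f = (\<Sum>j<N. (cmod (cinner f (w j)))\<^sup>2 - (cmod (cinner f (v j)))\<^sup>2)"

lemma sums_replacement_frame:
  assumes "orthonormal_basis v"
  shows "(\<lambda>j. (cmod (cinner f (if j < N then w j else v j)))\<^sup>2)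
           sums (replacement_form v w N f + (norm f)\<^sup>2)"
proof -
  let ?a = "\<lambda>j. (cmod (cinner f (if j < N then w j else v j)))\<^sup>2"
  let ?c = "\<lambda>j. (cmod (cinner f (v j)))\<^sup>2"
  have "(\<lambda>j. ?c (j + N)) sums ((norm f)\<^sup>2 - (\<Sum>j<N. ?c j))"
    using parseval[OF assms, of f] sums_iff_shift[of ?c N] by simp
  then have "(\<lambda>j. ?a (j + N)) sums ((norm f)\<^sup>2 - (\<Sum>j<N. ?c j))"
    by simp
  then have "?a sums ((norm f)\<^sup>2 - (\<Sum>j<N. ?c j) + (\<Sum>j<N. ?a j))"
    by (rule sums_iff_shift[THEN iffD1])
  moreover have "(\<Sum>j<N. ?a j) = (\<Sum>j<N. (cmod (cinner f (w j)))\<^sup>2)"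
    by simp
  ultimately show ?thesis
    unfolding replacement_form_def by (simp add: sum_subtractf algebra_simps)
qed

lemma replacement_form_scaleR: "replacement_form v w N (r *\<^sub>R f) = r\<^sup>2 * replacement_form v w N f"
  by (simp add: replacement_form_def cinner_scaleR_left norm_mult power_mult_distrib
      sum_distrib_left algebra_simps)

lemma continuous_on_replacement_form: "continuous_on S (replacement_form v w N)"
  unfolding replacement_form_def[abs_def] cinner_eq_Complex_inner by (intro continuous_intros)

lemma replacement_form_nonneg_at_w:
  assumes orth: "\<And>i j. cinner (v i) (v j) = (if i = j then 1 else 0)"
    and "norm (w k) = 1" "k < N"
  shows "0 \<le> replacement_form v w N (w k)"
proof -
  have "(\<Sum>j<N. (cmod (cinner (w k) (v j)))\<^sup>2) \<le> (norm (w k))\<^sup>2"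
    by (rule bessel_inequality) (simp_all add: orth)
  also have "\<dots> = (cmod (cinner (w k) (w k)))\<^sup>2"
    using assms(2) by (simp add: cinner_self)
  also have "\<dots> \<le> (\<Sum>j<N. (cmod (cinner (w k) (w j)))\<^sup>2)"
    using member_le_sum[of k "{..<N}" "\<lambda>j. (cmod (cinner (w k) (w j)))\<^sup>2"] assms(3) by simp
  finally show ?thesis
    unfolding replacement_form_def by (simp add: sum_subtractf)
qed

(* Averaging: by Bessel, sum_i sum_j |<v_i,w_j>|^2 <= N, so some v_i has total overlap <= 1. *)
lemma replacement_form_nonpos_at_some_v:
  assumes orth: "\<And>i j. cinner (v i) (v j) = (if i = j then 1 else 0)"
    and unit: "\<And>j. norm (w j) = 1" and "0 < N"
  obtains i where "i < N" "replacement_form v w N (v i) \<le> 0"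
proof -
  let ?overlap = "\<lambda>i. \<Sum>j<N. (cmod (cinner (v i) (w j)))\<^sup>2"
  have "(\<Sum>i<N. ?overlap i) = (\<Sum>j<N. \<Sum>i<N. (cmod (cinner (w j) (v i)))\<^sup>2)"
    by (subst sum.swap) (simp add: cmod_cinner_commute)
  also have "\<dots> \<le> (\<Sum>j<N. (norm (w j))\<^sup>2)"
    by (intro sum_mono bessel_inequality) (simp_all add: orth)
  finally have "(\<Sum>i<N. ?overlap i) \<le> (\<Sum>i<N. 1)"
    by (simp add: unit)
  then obtain i where "i < N" "?overlap i \<le> 1"
    using sum_strict_mono[of "{..<N}" "\<lambda>_. 1" ?overlap] \<open>0 < N\<close> by force
  have "(\<Sum>j<N. (cmod (cinner (v i) (v j)))\<^sup>2) = (\<Sum>j<N. if j = i then 1 else 0)"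
    by (intro sum.cong) (auto simp: orth)
  with \<open>i < N\<close> \<open>?overlap i \<le> 1\<close> show ?thesis
    using that by (simp add: replacement_form_def sum_subtractf)
qed

lemma replacement_form_extremal_vectors:
  fixes v w :: "nat \<Rightarrow> 'a::complex_inner"
  assumes orth: "\<And>i j. cinner (v i) (v j) = (if i = j then 1 else 0)"
    and unit: "\<And>j. norm (w j) = 1" and "0 < N"
  obtains fa fb where "fa \<in> cspan (v ` {..<N} \<union> w ` {..<N})" "norm fa = 1"
    and "fb \<in> cspan (v ` {..<N} \<union> w ` {..<N})" "norm fb = 1"
    and "\<And>f. (replacement_form v w N fa + 1) * (norm f)\<^sup>2 \<le> replacement_form v w N f + (norm f)\<^sup>2"
    and "\<And>f. replacement_form v w N f + (norm f)\<^sup>2 \<le> (replacement_form v w N fb + 1) * (norm f)\<^sup>2"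
proof -
  define X where "X = v ` {..<N} \<union> w ` {..<N}"
  \<comment> \<open>Q depends on f only through the real inner products with G, and the real span of G
    lies in the complex span of X.\<close>
  define G where "G = X \<union> scaleC \<i> ` X"
  define K where "K = span G \<inter> sphere 0 1"
  let ?Q = "replacement_form v w N"
  have "finite G"
    unfolding G_def X_def by simp
  have "K \<subseteq> cspan X"
    unfolding K_def G_def using span_subset_cspan[of X] by (auto simp: X_def)
  have unit_in_K: "x \<in> K" if "x \<in> X" "norm x = 1" for x
    using that unfolding K_def G_def by (auto intro: span_base)
  obtain i where "i < N" "?Q (v i) \<le> 0"
    by (rule replacement_form_nonpos_at_some_v[of v w N, OF orth unit \<open>0 < N\<close>])
  moreover have "norm (v i) = 1"
    using orth[of i i] by (simp add: cinner_self_eq_1_iff)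
  ultimately have "v i \<in> K"
    using unit_in_K[of "v i"] by (simp add: X_def)
  have "w 0 \<in> K"
    using unit_in_K[of "w 0"] unit \<open>0 < N\<close> by (simp add: X_def)
  have "0 \<le> ?Q (w 0)"
    by (rule replacement_form_nonneg_at_w[of v w 0 N, OF orth unit \<open>0 < N\<close>])
  have "compact K"
    unfolding K_def using \<open>finite G\<close> by (rule compact_span_Int_sphere)
  moreover have "K \<noteq> {}"
    using \<open>w 0 \<in> K\<close> by blast
  ultimately obtain fa fb where "fa \<in> K" "fb \<in> K"
    and extremal: "\<And>g. g \<in> K \<Longrightarrow> ?Q fa \<le> ?Q g \<and> ?Q g \<le> ?Q fb"
    using continuous_attains_inf[of K ?Q] continuous_attains_sup[of K ?Q]
      continuous_on_replacement_form by metis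
  have Q_local: "?Q f = ?Q g" if "\<And>x. x \<in> G \<Longrightarrow> inner f x = inner g x" for f g
  proof -
    have "cinner f x = cinner g x" if "x \<in> X" for x
      using that \<open>\<And>x. x \<in> G \<Longrightarrow> inner f x = inner g x\<close> by (simp add: cinner_eq_Complex_inner G_def)
    then show ?thesis
      by (simp add: replacement_form_def X_def)
  qed
  have bounds: "(?Q fa + 1) * (norm f)\<^sup>2 \<le> ?Q f + (norm f)\<^sup>2 \<and> ?Q f + (norm f)\<^sup>2 \<le> (?Q fb + 1) * (norm f)\<^sup>2"
    for f
  proof (rule homogeneous_form_bounds[OF \<open>finite G\<close> Q_local replacement_form_scaleR])
    show "?Q fa + 1 \<le> ?Q g + 1 \<and> ?Q g + 1 \<le> ?Q fb + 1" if "g \<in> span G" "norm g = 1" for g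
      using that extremal unfolding K_def by simp
    show "?Q fa + 1 \<le> 1" "1 \<le> ?Q fb + 1"
      using extremal[OF \<open>v i \<in> K\<close>] extremal[OF \<open>w 0 \<in> K\<close>] \<open>?Q (v i) \<le> 0\<close> \<open>0 \<le> ?Q (w 0)\<close>
      by simp_all
  qed
  have "fa \<in> cspan X" "norm fa = 1" "fb \<in> cspan X" "norm fb = 1"
    using \<open>fa \<in> K\<close> \<open>fb \<in> K\<close> \<open>K \<subseteq> cspan X\<close> unfolding K_def by auto
  with bounds show ?thesis
    using that[of fa fb] unfolding X_def by blast
qed

section \<open>Frames with extremal vectors\<close>

lemma frame_bounds_of_extremal_vectors:
  fixes u :: "nat \<Rightarrow> 'a::complex_inner"
  assumes sums: "\<And>f. (\<lambda>j. (cmod (cinner f (u j)))\<^sup>2) sums \<sigma> f"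
    and lower: "\<And>f. \<sigma> fa * (norm f)\<^sup>2 \<le> \<sigma> f" and upper: "\<And>f. \<sigma> f \<le> \<sigma> fb * (norm f)\<^sup>2"
    and "norm fb = 1" "0 < \<sigma> fa"
  shows "frame_bounds u (\<sigma> fa) (\<sigma> fb)"
proof -
  have "\<sigma> fa \<le> \<sigma> fb"
    using lower[of fb] \<open>norm fb = 1\<close> by simp
  then show ?thesis
    unfolding frame_bounds_def using sums lower upper \<open>0 < \<sigma> fa\<close> by (auto simp: sums_iff)
qed

lemma optimal_frame_bounds_of_extremal_vectors:
  fixes u :: "nat \<Rightarrow> 'a::complex_inner"
  assumes sums: "\<And>f. (\<lambda>j. (cmod (cinner f (u j)))\<^sup>2) sums \<sigma> f"
    and lower: "\<And>f. \<sigma> fa * (norm f)\<^sup>2 \<le> \<sigma> f" and upper: "\<And>f. \<sigma> f \<le> \<sigma> fb * (norm f)\<^sup>2"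
    and "norm fa = 1" "norm fb = 1" "0 < \<sigma> fa"
  shows "optimal_frame_bounds u (\<sigma> fa) (\<sigma> fb)"
proof -
  have "A \<le> \<sigma> fa \<and> \<sigma> fb \<le> B" if "frame_bounds u A B" for A B
    using that sums[of fa] sums[of fb] \<open>norm fa = 1\<close> \<open>norm fb = 1\<close>
    unfolding frame_bounds_def by (metis mult.right_neutral power_one sums_unique)
  then show ?thesis
    unfolding optimal_frame_bounds_def
    using frame_bounds_of_extremal_vectors[OF assms(1-3,5,6)] by blast
qed

lemma frame_sum_pos:
  assumes "frame u" "norm f = 1"
  shows "0 < (\<Sum>j. (cmod (cinner f (u j)))\<^sup>2)"
proof -
  obtain A B where "frame_bounds u A B"
    using assms(1) unfolding frame_def by blast
  then show ?thesis
    using assms(2) unfolding frame_bounds_def by (metis less_le_trans mult.right_neutral power_one)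
qed

lemma frame_iff_extremal_vectors:
  fixes u :: "nat \<Rightarrow> 'a::complex_inner"
  assumes sums: "\<And>f. (\<lambda>j. (cmod (cinner f (u j)))\<^sup>2) sums \<sigma> f"
    and lower: "\<And>f. \<sigma> fa * (norm f)\<^sup>2 \<le> \<sigma> f" and upper: "\<And>f. \<sigma> f \<le> \<sigma> fb * (norm f)\<^sup>2"
    and unit: "\<And>f. f \<in> D \<Longrightarrow> norm f = 1" and \<Phi>_eq: "\<And>f. f \<in> D \<Longrightarrow> \<Phi> f = \<sigma> f"
    and "fa \<in> D" "fb \<in> D"
  shows "(frame u \<longleftrightarrow> (\<forall>f \<in> D. \<Phi> f > 0)) \<and>
         (frame u \<longrightarrow>
            (\<exists>A M. optimal_frame_bounds u A M \<and>
               (\<exists>f \<in> D. \<Phi> f = A) \<and> (\<forall>f \<in> D. A \<le> \<Phi> f) \<and>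
               (\<exists>f \<in> D. \<Phi> f = M) \<and> (\<forall>f \<in> D. \<Phi> f \<le> M)))"
proof -
  have on_D: "\<Phi> fa \<le> \<Phi> f \<and> \<Phi> f \<le> \<Phi> fb" if "f \<in> D" for f
    using lower[of f] upper[of f] unit[OF that] \<Phi>_eq that \<open>fa \<in> D\<close> \<open>fb \<in> D\<close> by simp
  have frame_iff: "frame u \<longleftrightarrow> 0 < \<sigma> fa"
  proof
    show "0 < \<sigma> fa" if "frame u"
      using frame_sum_pos[OF that unit[OF \<open>fa \<in> D\<close>]] sums_unique[OF sums, of fa] by simp
    show "frame u" if "0 < \<sigma> fa"
      using frame_bounds_of_extremal_vectors[OF sums lower upper unit[OF \<open>fb \<in> D\<close>] that]
      unfolding frame_def by blast
  qed
  show ?thesis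
  proof (intro conjI impI)
    show "frame u \<longleftrightarrow> (\<forall>f \<in> D. \<Phi> f > 0)"
      using frame_iff on_D \<Phi>_eq \<open>fa \<in> D\<close> by fastforce
    assume "frame u"
    then have "optimal_frame_bounds u (\<Phi> fa) (\<Phi> fb)"
      using optimal_frame_bounds_of_extremal_vectors[OF sums lower upper unit unit]
        frame_iff \<Phi>_eq \<open>fa \<in> D\<close> \<open>fb \<in> D\<close> by simp
    then show "\<exists>A M. optimal_frame_bounds u A M \<and>
               (\<exists>f \<in> D. \<Phi> f = A) \<and> (\<forall>f \<in> D. A \<le> \<Phi> f) \<and>
               (\<exists>f \<in> D. \<Phi> f = M) \<and> (\<forall>f \<in> D. \<Phi> f \<le> M)"
      using on_D \<open>fa \<in> D\<close> \<open>fb \<in> D\<close> by blast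
  qed
qed

theorem mainTheorem3:
  fixes v w :: "nat \<Rightarrow> 'a::{complex_inner, complete_space}"
    and N :: nat
  assumes onb: "orthonormal_basis v"
    and unit: "\<And>j. norm (w j) = 1"
    and N: "N \<ge> 1"
  defines "B \<equiv> (\<lambda>j. if j < N then w j else v j)"
    and "Hhat \<equiv> cspan (v ` {..<N} \<union> w ` {..<N})"
    and "S \<equiv> {f. norm f = 1}"
    and "\<Phi> \<equiv> (\<lambda>f. (\<Sum>j<N. (cmod (cinner f (w j)))\<^sup>2 - (cmod (cinner f (v j)))\<^sup>2) + 1)"
  shows "(frame B \<longleftrightarrow> (\<forall>f \<in> S \<inter> Hhat. \<Phi> f > 0)) \<and>
         (frame B \<longrightarrow>
            (\<exists>A M. optimal_frame_bounds B A M \<and>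
               (\<exists>f \<in> S \<inter> Hhat. \<Phi> f = A) \<and> (\<forall>f \<in> S \<inter> Hhat. A \<le> \<Phi> f) \<and>
               (\<exists>f \<in> S \<inter> Hhat. \<Phi> f = M) \<and> (\<forall>f \<in> S \<inter> Hhat. \<Phi> f \<le> M)))"
proof -
  have orth: "\<And>i j. cinner (v i) (v j) = (if i = j then 1 else 0)"
    using onb unfolding orthonormal_basis_def by blast
  have "0 < N"
    using N by simp
  define \<sigma> where "\<sigma> f = replacement_form v w N f + (norm f)\<^sup>2" for f
  have sums: "(\<lambda>j. (cmod (cinner f (B j)))\<^sup>2) sums \<sigma> f" for f
    unfolding B_def \<sigma>_def by (rule sums_replacement_frame[OF onb])
  obtain fa fb where "fa \<in> cspan (v ` {..<N} \<union> w ` {..<N})" "norm fa = 1"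
    and "fb \<in> cspan (v ` {..<N} \<union> w ` {..<N})" "norm fb = 1"
    and "\<And>f. (replacement_form v w N fa + 1) * (norm f)\<^sup>2 \<le> replacement_form v w N f + (norm f)\<^sup>2"
    and "\<And>f. replacement_form v w N f + (norm f)\<^sup>2 \<le> (replacement_form v w N fb + 1) * (norm f)\<^sup>2"
    using replacement_form_extremal_vectors[of v w N, OF orth unit \<open>0 < N\<close>] by blast
  then have "fa \<in> S \<inter> Hhat" "fb \<in> S \<inter> Hhat"
    and extremal: "\<And>f. \<sigma> fa * (norm f)\<^sup>2 \<le> \<sigma> f" "\<And>f. \<sigma> f \<le> \<sigma> fb * (norm f)\<^sup>2"
    unfolding S_def Hhat_def by (simp_all add: \<sigma>_def)
  moreover have "norm f = 1" "\<Phi> f = \<sigma> f" if "f \<in> S \<inter> Hhat" for f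
    using that unfolding \<Phi>_def \<sigma>_def S_def replacement_form_def by simp_all
  ultimately show ?thesis
    by (intro frame_iff_extremal_vectors[OF sums extremal])
qed

end
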